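(* Let $X$ and $Y$ be metric spaces and $\mathcal F\subseteq Y^X$. (1) If $\mathcal F$ has (PECP), then $\mathcal F$ is equi-Baire 1. (2) If $X$ is hereditarily Baire, then $\mathcal F$ is equi-Baire 1 if and only if $\mathcal F$ has (PECP).
   Context: Let $(X,\rho)$, $(Y,d)$ be metric spaces. $\mathcal F\subseteq Y^X$ is equi-Baire 1 if for every $\varepsilon>0$ there is $\delta_\varepsilon\colon X\to(0,\infty)$ such that for all $x,y\in X$ and all $f\in\mathcal F$, $\rho(x,y)<\min\{\delta_\varepsilon(x),\delta_\varepsilon(y)\}$ implies $d(f(x),f(y))<\varepsilon$. $\mathcal F$ has (PECP) if for every nonempty closed $F\subseteq X$ the family $\{f|_F:f\in\mathcal F\}$ has a point of equicontinuity, i.e. a point $x\in F$ such that for every $\varepsilon>0$ there is a neighborhood $U$ of $x$ with $d(f(x'),f(x))<\varepsilon$ for all $x'\in U\cap F$ and $f\in\mathcal F$. A space is hereditarily Baire if every nonempty closed subspace is a Baire space (every nonempty open subset nonmeager in itself). *)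

theory Defs
  imports "HOL-Analysis.Analysis"
begin

definition equi_Baire1 :: "('a::metric_space \<Rightarrow> 'b::metric_space) set \<Rightarrow> bool" where
  "equi_Baire1 F \<longleftrightarrow>
     (\<forall>\<epsilon>>0. \<exists>\<delta>::'a \<Rightarrow> real. (\<forall>x. \<delta> x > 0) \<and>
        (\<forall>x y. \<forall>f\<in>F. dist x y < min (\<delta> x) (\<delta> y) \<longrightarrow> dist (f x) (f y) < \<epsilon>))"

definition equicont_point_on :: "('a::metric_space \<Rightarrow> 'b::metric_space) set \<Rightarrow> 'a set \<Rightarrow> 'a \<Rightarrow> bool" where
  "equicont_point_on F S x \<longleftrightarrow> x \<in> S \<and>
     (\<forall>\<epsilon>>0. \<exists>U. open U \<and> x \<in> U \<and> (\<forall>x'\<in>U \<inter> S. \<forall>f\<in>F. dist (f x') (f x) < \<epsilon>))"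

definition PECP :: "('a::metric_space \<Rightarrow> 'b::metric_space) set \<Rightarrow> bool" where
  "PECP F \<longleftrightarrow> (\<forall>S. closed S \<and> S \<noteq> {} \<longrightarrow> (\<exists>x. equicont_point_on F S x))"

definition nowhere_dense_in :: "'a topology \<Rightarrow> 'a set \<Rightarrow> bool" where
  "nowhere_dense_in T A \<longleftrightarrow> A \<subseteq> topspace T \<and> T interior_of (T closure_of A) = {}"

definition meager_in :: "'a topology \<Rightarrow> 'a set \<Rightarrow> bool" where
  "meager_in T A \<longleftrightarrow> A \<subseteq> topspace T \<and>
     (\<exists>N::nat \<Rightarrow> 'a set. (\<forall>n. nowhere_dense_in T (N n)) \<and> A \<subseteq> (\<Union>n. N n))"

definition Baire_space :: "'a topology \<Rightarrow> bool" where
  "Baire_space T \<longleftrightarrow> (\<forall>U. openin T U \<and> U \<noteq> {} \<longrightarrow> \<not> meager_in T U)"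

definition hereditarily_Baire :: "'a::topological_space itself \<Rightarrow> bool" where
  "hereditarily_Baire _ \<longleftrightarrow> (\<forall>S::'a set. closed S \<and> S \<noteq> {} \<longrightarrow> Baire_space (top_of_set S))"

end

theory Submission
  imports Defs
begin

(* (1) Fix \<epsilon> and let D remove from a closed set S the points near which F oscillates
   by less than \<epsilon> on S. By (PECP), D strictly shrinks every nonempty closed set, so the
   transfinite iteration of D starting from X exhausts X. Every x then has a last stage A x
   containing it, relative to which x has a neighbourhood of \<epsilon>-small oscillation; its
   radius is \<delta>(x). The stages are linearly ordered, so of two points closer than both radii
   one lies in the stage of the other, inside that neighbourhood.
   (2) Given a gauge \<delta> for \<epsilon> and a nonempty relatively open W of a closed S, the sets
   {\<delta> \<ge> 1/k} cover W, so by the Baire property one of them is dense in an open piece of W;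
   points there are within 1/k of each other, hence within both radii, and F oscillates by
   at most 3\<epsilon> near them. So the points of small oscillation form dense open subsets of S,
   and a point in all of them (Baire again) is a point of equicontinuity. *)

section \<open>Transfinite iteration of a deflationary operator\<close>

(* The empty intersection makes UNIV the first stage. *)
inductive_set deflation_tower :: "('a set \<Rightarrow> 'a set) \<Rightarrow> 'a set set" for D where
  deflation_tower_step: "S \<in> deflation_tower D \<Longrightarrow> D S \<in> deflation_tower D"
| deflation_tower_Inter: "(\<And>S. S \<in> M \<Longrightarrow> S \<in> deflation_tower D) \<Longrightarrow> \<Inter>M \<in> deflation_tower D"

lemma deflation_tower_comparable_with:
  assumes deflationary: "\<And>S. D S \<subseteq> S"
    and A: "\<forall>B\<in>deflation_tower D. A \<subseteq> B \<longrightarrow> B = A \<or> A \<subseteq> D B"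
    and "B \<in> deflation_tower D"
  shows "A \<subseteq> B \<or> B \<subseteq> D A"
  using \<open>B \<in> deflation_tower D\<close>
proof (induction B rule: deflation_tower.induct)
  case (deflation_tower_step C)
  then show ?case using A deflationary by blast
next
  case (deflation_tower_Inter M)
  then show ?case by blast
qed

lemma deflation_tower_above:
  assumes deflationary: "\<And>S. D S \<subseteq> S"
    and "A \<in> deflation_tower D"
  shows "\<forall>B\<in>deflation_tower D. A \<subseteq> B \<longrightarrow> B = A \<or> A \<subseteq> D B"
  using \<open>A \<in> deflation_tower D\<close>
proof (induction A rule: deflation_tower.induct)
  case (deflation_tower_step C)
  show ?case
  proof (intro ballI impI)
    fix B assume B: "B \<in> deflation_tower D" "D C \<subseteq> B"
    from deflation_tower_comparable_with[OF deflationary deflation_tower_step.IH B(1)]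
    consider "C \<subseteq> B" | "B \<subseteq> D C" by blast
    then show "B = D C \<or> D C \<subseteq> D B"
    proof cases
      case 1
      with deflation_tower_step.IH B(1) have "B = C \<or> C \<subseteq> D B" by blast
      then show ?thesis using deflationary[of C] by blast
    next
      case 2
      with B(2) show ?thesis by blast
    qed
  qed
next
  case (deflation_tower_Inter M)
  show ?case
  proof (intro ballI impI)
    fix B assume B: "B \<in> deflation_tower D" "\<Inter>M \<subseteq> B"
    show "B = \<Inter>M \<or> \<Inter>M \<subseteq> D B"
    proof (cases "\<exists>C\<in>M. C \<subset> B")
      case True
      with deflation_tower_Inter.IH B(1) show ?thesis by blast
    next
      case False
      have "B \<subseteq> C" if "C \<in> M" for C
        using deflation_tower_comparable_with[OF deflationary _ B(1), of C]
          deflation_tower_Inter.IH that False deflationary[of C] by blast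
      with B(2) show ?thesis by blast
    qed
  qed
qed

lemma deflation_tower_linear:
  assumes "\<And>S. D S \<subseteq> S" and "A \<in> deflation_tower D" "B \<in> deflation_tower D"
  shows "A \<subseteq> B \<or> B \<subseteq> D A"
  using deflation_tower_comparable_with deflation_tower_above assms by metis

lemma deflation_tower_rank:
  assumes deflationary: "\<And>S. D S \<subseteq> S"
    and strict: "\<And>T. T \<in> deflation_tower D \<Longrightarrow> T \<noteq> {} \<Longrightarrow> D T \<noteq> T"
  obtains A where "\<And>x. x \<in> A x - D (A x)" "\<And>x y. y \<in> A x \<or> x \<in> A y"
proof
  define A where "A x = \<Inter>{T \<in> deflation_tower D. x \<in> T}" for x
  have A_tower: "A x \<in> deflation_tower D" for x
    unfolding A_def by (rule deflation_tower_Inter) blast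
  have x_A: "x \<in> A x" for x
    unfolding A_def by blast
  show "x \<in> A x - D (A x)" for x
  proof
    show "x \<notin> D (A x)"
    proof
      assume "x \<in> D (A x)"
      then have "A x \<subseteq> D (A x)"
        using deflation_tower_step[OF A_tower] unfolding A_def by blast
      then show False
        using strict[OF A_tower] deflationary x_A by blast
    qed
  qed (rule x_A)
  show "y \<in> A x \<or> x \<in> A y" for x y
    using deflation_tower_linear[OF deflationary A_tower A_tower, of x y]
      deflationary[of "A x"] x_A by blast
qed

lemma deflation_tower_closed:
  assumes "\<And>S. closed S \<Longrightarrow> closed (D S)" and "T \<in> deflation_tower D"
  shows "closed T"
  using \<open>T \<in> deflation_tower D\<close> by induction (use assms(1) in blast)+

definition small_osc_points :: "('a::metric_space \<Rightarrow> 'b::metric_space) set \<Rightarrow> real \<Rightarrow> 'a set \<Rightarrow> 'a set"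
  where "small_osc_points F e S =
    {x. \<exists>V. open V \<and> x \<in> V \<and> (\<forall>a\<in>V \<inter> S. \<forall>b\<in>V \<inter> S. \<forall>f\<in>F. dist (f a) (f b) < e)}"

lemma open_small_osc_points: "open (small_osc_points F e S)"
  unfolding small_osc_points_def by (subst open_subopen) blast

lemma small_osc_points_mono: "e \<le> e' \<Longrightarrow> small_osc_points F e S \<subseteq> small_osc_points F e' S"
  unfolding small_osc_points_def by (fastforce elim!: less_le_trans)

lemma equicont_point_on_iff_small_osc:
  "equicont_point_on F S x \<longleftrightarrow> x \<in> S \<and> (\<forall>e>0. x \<in> small_osc_points F e S)"
proof
  assume x: "equicont_point_on F S x"
  have "x \<in> small_osc_points F e S" if "e > 0" for e
  proof -
    obtain V where V: "open V" "x \<in> V" "\<forall>a\<in>V \<inter> S. \<forall>f\<in>F. dist (f a) (f x) < e/2"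
      using x \<open>e > 0\<close> unfolding equicont_point_on_def by (meson half_gt_zero)
    then have "\<forall>a\<in>V \<inter> S. \<forall>b\<in>V \<inter> S. \<forall>f\<in>F. dist (f a) (f b) < e"
      using dist_triangle_half_l by blast
    with V(1,2) show ?thesis
      unfolding small_osc_points_def by blast
  qed
  with x show "x \<in> S \<and> (\<forall>e>0. x \<in> small_osc_points F e S)"
    unfolding equicont_point_on_def by blast
next
  assume x: "x \<in> S \<and> (\<forall>e>0. x \<in> small_osc_points F e S)"
  have "\<exists>V. open V \<and> x \<in> V \<and> (\<forall>a\<in>V \<inter> S. \<forall>f\<in>F. dist (f a) (f x) < e)" if "e > 0" for e
  proof -
    obtain V where "open V" "x \<in> V" "\<forall>a\<in>V \<inter> S. \<forall>b\<in>V \<inter> S. \<forall>f\<in>F. dist (f a) (f b) < e"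
      using x \<open>e > 0\<close> unfolding small_osc_points_def by blast
    with x show ?thesis by blast
  qed
  with x show "equicont_point_on F S x"
    unfolding equicont_point_on_def by blast
qed

lemma small_osc_stages_imp_gauge:
  assumes x_A: "\<And>x. x \<in> A x" and osc: "\<And>x. x \<in> small_osc_points F \<epsilon> (A x)"
    and linear: "\<And>x y. y \<in> A x \<or> x \<in> A y"
  obtains \<delta> where "\<And>x. \<delta> x > 0"
    "\<And>x y f. f \<in> F \<Longrightarrow> dist x y < min (\<delta> x) (\<delta> y) \<Longrightarrow> dist (f x) (f y) < \<epsilon>"
proof -
  have "\<forall>x. \<exists>r>0. \<forall>a\<in>ball x r \<inter> A x. \<forall>b\<in>ball x r \<inter> A x. \<forall>f\<in>F. dist (f a) (f b) < \<epsilon>"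
  proof
    fix x
    obtain V where V: "open V" "x \<in> V"
      "\<forall>a\<in>V \<inter> A x. \<forall>b\<in>V \<inter> A x. \<forall>f\<in>F. dist (f a) (f b) < \<epsilon>"
      using osc[of x] unfolding small_osc_points_def by blast
    then obtain r where "r > 0" "ball x r \<subseteq> V"
      using open_contains_ball by blast
    with V(3) show "\<exists>r>0. \<forall>a\<in>ball x r \<inter> A x. \<forall>b\<in>ball x r \<inter> A x. \<forall>f\<in>F. dist (f a) (f b) < \<epsilon>"
      by blast
  qed
  from choice[OF this] obtain \<delta> where \<delta>: "\<And>x. \<delta> x > 0"
    "\<And>x. \<forall>a\<in>ball x (\<delta> x) \<inter> A x. \<forall>b\<in>ball x (\<delta> x) \<inter> A x. \<forall>f\<in>F. dist (f a) (f b) < \<epsilon>"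
    by blast
  have close_in_stage: "dist (f x) (f y) < \<epsilon>" if "f \<in> F" "y \<in> A x" "dist x y < \<delta> x" for f x y
  proof -
    have "x \<in> ball x (\<delta> x) \<inter> A x" "y \<in> ball x (\<delta> x) \<inter> A x"
      using \<delta>(1)[of x] x_A[of x] that(2,3) by auto
    then show ?thesis
      using \<delta>(2)[of x] \<open>f \<in> F\<close> by blast
  qed
  have "dist (f x) (f y) < \<epsilon>" if "f \<in> F" "dist x y < min (\<delta> x) (\<delta> y)" for f x y
    using linear[of x y]
  proof
    assume "y \<in> A x"
    then show ?thesis
      using close_in_stage[OF that(1) \<open>y \<in> A x\<close>] that(2) by simp
  next
    assume "x \<in> A y"
    then show ?thesis
      using close_in_stage[OF that(1) \<open>x \<in> A y\<close>] that(2) by (simp add: dist_commute)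
  qed
  with \<delta>(1) show thesis
    using that by blast
qed

lemma PECP_imp_equi_Baire1:
  fixes F :: "('a::metric_space \<Rightarrow> 'b::metric_space) set"
  assumes "PECP F"
  shows "equi_Baire1 F"
  unfolding equi_Baire1_def
proof (intro allI impI)
  fix \<epsilon> :: real assume "\<epsilon> > 0"
  define D where "D S = S - small_osc_points F \<epsilon> S" for S
  have deflationary: "D S \<subseteq> S" for S
    unfolding D_def by blast
  have strict: "D T \<noteq> T" if "T \<in> deflation_tower D" "T \<noteq> {}" for T
  proof -
    have "closed T"
      by (rule deflation_tower_closed[OF _ that(1)])
        (simp add: D_def closed_Diff open_small_osc_points)
    then obtain z where "equicont_point_on F T z"
      using \<open>PECP F\<close> \<open>T \<noteq> {}\<close> unfolding PECP_def by blast
    then have "z \<in> T" "z \<in> small_osc_points F \<epsilon> T"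
      using \<open>\<epsilon> > 0\<close> unfolding equicont_point_on_iff_small_osc by blast+
    then show ?thesis
      unfolding D_def by blast
  qed
  obtain A where A: "\<And>x. x \<in> A x - D (A x)" "\<And>x y. y \<in> A x \<or> x \<in> A y"
    using deflation_tower_rank[OF deflationary strict] by metis
  have "x \<in> A x" "x \<in> small_osc_points F \<epsilon> (A x)" for x
    using A(1)[of x] unfolding D_def by blast+
  then obtain \<delta> where "\<And>x. \<delta> x > 0"
    "\<And>x y f. f \<in> F \<Longrightarrow> dist x y < min (\<delta> x) (\<delta> y) \<Longrightarrow> dist (f x) (f y) < \<epsilon>"
    using small_osc_stages_imp_gauge A(2) by metis
  then show "\<exists>\<delta>. (\<forall>x. \<delta> x > 0) \<and>
      (\<forall>x y. \<forall>f\<in>F. dist x y < min (\<delta> x) (\<delta> y) \<longrightarrow> dist (f x) (f y) < \<epsilon>)"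
    by blast
qed

section \<open>The Baire category argument\<close>

lemma small_osc_points_near_gauge_bounded_set:
  fixes F :: "('a::metric_space \<Rightarrow> 'b::metric_space) set"
  assumes \<delta>_pos: "\<And>x. \<delta> x > 0"
    and \<delta>: "\<And>x y f. f \<in> F \<Longrightarrow> dist x y < min (\<delta> x) (\<delta> y) \<Longrightarrow> dist (f x) (f y) < \<epsilon>"
    and \<eta>: "\<eta> > 0" "\<And>x. x \<in> E \<Longrightarrow> \<eta> \<le> \<delta> x"
    and G: "open G" "G \<inter> S \<subseteq> closure E"
    and q: "q \<in> G \<inter> E"
  shows "q \<in> small_osc_points F (3 * \<epsilon>) S"
proof -
  define V where "V = G \<inter> ball q (\<eta>/2)"
  have V: "open V" "q \<in> V"
    using G q \<eta> unfolding V_def by auto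
  have V_small: "dist u v < \<eta>" if "u \<in> V" "v \<in> V" for u v
  proof -
    have "dist q u < \<eta>/2" "dist q v < \<eta>/2"
      using that unfolding V_def by auto
    then show ?thesis
      using dist_triangle3[of u v q] by linarith
  qed
  have approx: "\<exists>a'\<in>E \<inter> V. dist (f a) (f a') < \<epsilon>" if a: "a \<in> V \<inter> S" and f: "f \<in> F" for a f
  proof -
    have "open (V \<inter> ball a (\<delta> a))"
      using V(1) by blast
    moreover have "a \<in> V \<inter> ball a (\<delta> a) \<inter> closure E"
      using a G(2) \<delta>_pos[of a] unfolding V_def by auto
    ultimately have "V \<inter> ball a (\<delta> a) \<inter> E \<noteq> {}"
      using open_Int_closure_eq_empty by (metis empty_iff)
    then obtain a' where a': "a' \<in> E" "a' \<in> V" "dist a a' < \<delta> a"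
      by auto
    have "dist a a' < \<delta> a'"
      using V_small[of a a'] \<eta>(2)[OF a'(1)] a a'(2) by simp
    with a' show ?thesis
      using \<delta>[OF f, of a a'] by auto
  qed
  have "dist (f a) (f b) < 3 * \<epsilon>" if ab: "a \<in> V \<inter> S" "b \<in> V \<inter> S" and f: "f \<in> F" for a b f
  proof -
    obtain a' where a': "a' \<in> E \<inter> V" "dist (f a) (f a') < \<epsilon>"
      using approx ab f by blast
    obtain b' where b': "b' \<in> E \<inter> V" "dist (f b) (f b') < \<epsilon>"
      using approx ab f by blast
    have "dist a' b' < min (\<delta> a') (\<delta> b')"
      using V_small[of a' b'] \<eta>(2)[of a'] \<eta>(2)[of b'] a'(1) b'(1) by simp
    then have "dist (f a') (f b') < \<epsilon>"
      using \<delta>[OF f] by blast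
    moreover have "dist (f a) (f b) \<le> dist (f a) (f a') + dist (f a') (f b') + dist (f b) (f b')"
      using dist_triangle[of "f a" "f b" "f a'"] dist_triangle[of "f a'" "f b" "f b'"]
        dist_commute[of "f b'" "f b"] by linarith
    ultimately show ?thesis
      using a'(2) b'(2) by linarith
  qed
  with V show ?thesis
    unfolding small_osc_points_def by blast
qed

lemma somewhere_dense_in_subtopology:
  assumes "\<not> nowhere_dense_in (top_of_set S) E" "E \<subseteq> S"
  obtains G where "open G" "G \<inter> S \<noteq> {}" "G \<inter> S \<subseteq> closure E"
proof -
  obtain T where "openin (top_of_set S) T" "T \<noteq> {}" "T \<subseteq> top_of_set S closure_of E"
    using assms unfolding nowhere_dense_in_def interior_of_eq_empty by auto
  moreover have "top_of_set S closure_of E = S \<inter> closure E"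
    using assms(2) by (simp add: closure_of_subtopology Int_absorb1)
  ultimately show thesis
    using that unfolding openin_open by blast
qed

lemma nowhere_dense_large_osc:
  fixes F :: "('a::metric_space \<Rightarrow> 'b::metric_space) set"
  assumes Baire: "Baire_space (top_of_set S)"
    and \<delta>_pos: "\<And>x. \<delta> x > 0"
    and \<delta>: "\<And>x y f. f \<in> F \<Longrightarrow> dist x y < min (\<delta> x) (\<delta> y) \<Longrightarrow> dist (f x) (f y) < \<epsilon>"
  shows "nowhere_dense_in (top_of_set S) (S - small_osc_points F (3 * \<epsilon>) S)"
proof -
  let ?O = "small_osc_points F (3 * \<epsilon>) S"
  have closed: "closedin (top_of_set S) (S - ?O)"
    using closedin_closed_Int[OF closed_Compl[OF open_small_osc_points]] by (simp add: Diff_eq)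
  have "W = {}" if W: "openin (top_of_set S) W" "W \<subseteq> S - ?O" for W
  proof (rule ccontr)
    assume "W \<noteq> {}"
    define E where "E k = W \<inter> {x. 1 / Suc k \<le> \<delta> x}" for k :: nat
    have "W \<subseteq> (\<Union>k. E k)"
    proof
      fix x assume "x \<in> W"
      obtain k where "inverse (real (Suc k)) < \<delta> x"
        using reals_Archimedean \<delta>_pos by blast
      with \<open>x \<in> W\<close> show "x \<in> (\<Union>k. E k)"
        unfolding E_def by (auto simp: inverse_eq_divide intro: less_imp_le)
    qed
    moreover have "\<not> meager_in (top_of_set S) W"
      using Baire W(1) \<open>W \<noteq> {}\<close> unfolding Baire_space_def by blast
    ultimately obtain k where "\<not> nowhere_dense_in (top_of_set S) (E k)"
      using openin_subset[OF W(1)] unfolding meager_in_def by blast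
    moreover have "E k \<subseteq> S"
      using W unfolding E_def by blast
    ultimately obtain G where G: "open G" "G \<inter> S \<noteq> {}" "G \<inter> S \<subseteq> closure (E k)"
      by (rule somewhere_dense_in_subtopology)
    then obtain q where "q \<in> G \<inter> E k"
      using open_Int_closure_eq_empty[of G "E k"] by blast
    then have "q \<in> ?O"
      by (intro small_osc_points_near_gauge_bounded_set[where \<eta> = "1 / real (Suc k)",
            OF \<delta>_pos \<delta> _ _ G(1,3)])
        (auto simp: E_def)
    with \<open>q \<in> G \<inter> E k\<close> W(2) show False
      unfolding E_def by blast
  qed
  then have "top_of_set S interior_of (S - ?O) = {}"
    by (simp add: interior_of_eq_empty)
  then show ?thesis
    unfolding nowhere_dense_in_def using closure_of_closedin[OF closed] by auto
qed

lemma Baire_space_common_point: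
  assumes "Baire_space (top_of_set S)" "S \<noteq> {}"
    and "\<And>n::nat. nowhere_dense_in (top_of_set S) (S - U n)"
  obtains x where "x \<in> S" "\<And>n. x \<in> U n"
proof -
  have "\<not> meager_in (top_of_set S) S"
    using assms(1,2) unfolding Baire_space_def by simp
  then have "\<not> S \<subseteq> (\<Union>n. S - U n)"
    using assms(3) unfolding meager_in_def by (metis topspace_euclidean_subtopology order_refl)
  then show thesis
    using that by blast
qed

lemma equi_Baire1_imp_PECP:
  fixes F :: "('a::metric_space \<Rightarrow> 'b::metric_space) set"
  assumes "hereditarily_Baire TYPE('a)" "equi_Baire1 F"
  shows "PECP F"
  unfolding PECP_def
proof (intro allI impI)
  fix S :: "'a set" assume S: "closed S \<and> S \<noteq> {}"
  then have Baire: "Baire_space (top_of_set S)"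
    using assms(1) unfolding hereditarily_Baire_def by blast
  have "\<exists>\<delta>. (\<forall>x. \<delta> x > 0) \<and>
      (\<forall>x y. \<forall>f\<in>F. dist x y < min (\<delta> x) (\<delta> y) \<longrightarrow> dist (f x) (f y) < 1 / (3 * real (Suc n)))"
    for n :: nat
    using assms(2) unfolding equi_Baire1_def by simp
  then obtain \<delta> :: "nat \<Rightarrow> 'a \<Rightarrow> real" where \<delta>_pos: "\<And>n x. \<delta> n x > 0"
    and \<delta>: "\<And>n x y f. f \<in> F \<Longrightarrow> dist x y < min (\<delta> n x) (\<delta> n y) \<Longrightarrow>
        dist (f x) (f y) < 1 / (3 * real (Suc n))"
    by metis
  have thirds: "3 * (1 / (3 * real (Suc n))) = 1 / real (Suc n)" for n
    by (simp add: field_simps)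
  have "nowhere_dense_in (top_of_set S) (S - small_osc_points F (1 / real (Suc n)) S)" for n
    using nowhere_dense_large_osc[OF Baire \<delta>_pos \<delta>] unfolding thirds .
  then obtain x where x: "x \<in> S" "\<And>n. x \<in> small_osc_points F (1 / real (Suc n)) S"
    using Baire_space_common_point[where U = "\<lambda>n. small_osc_points F (1 / real (Suc n)) S",
        OF Baire conjunct2[OF S]]
    by blast
  have "equicont_point_on F S x"
    unfolding equicont_point_on_iff_small_osc
  proof (intro conjI allI impI)
    fix e :: real assume "e > 0"
    then obtain n where "inverse (real (Suc n)) < e"
      using reals_Archimedean by blast
    then show "x \<in> small_osc_points F e S"
      using x(2)[of n] small_osc_points_mono[of "1 / real (Suc n)" e F S]
      by (auto simp: inverse_eq_divide)
  qed (rule x)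
  then show "\<exists>x. equicont_point_on F S x" by blast
qed

theorem proposition3p5:
  fixes F :: "('a::metric_space \<Rightarrow> 'b::metric_space) set"
  shows "(PECP F \<longrightarrow> equi_Baire1 F) \<and>
         (hereditarily_Baire TYPE('a) \<longrightarrow> (equi_Baire1 F \<longleftrightarrow> PECP F))"
  using PECP_imp_equi_Baire1 equi_Baire1_imp_PECP by blast

end
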